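(* Let $m\ge n\ge p\ge 1$, let $A$ be an $m\times n$ real matrix and $N=\operatorname{diag}(\mu_1,\dots,\mu_p)$ with $\mu_1>\dots>\mu_p>0$. On $M=\mathrm{St}(p,m)\times\mathrm{St}(p,n)$ with metric $\langle(\xi_1,\eta_1),(\xi_2,\eta_2)\rangle_{(U,V)}=\operatorname{tr}(\xi_1^T\xi_2)+\operatorname{tr}(\eta_1^T\eta_2)$ and retraction $R_{(U,V)}(\xi,\eta)=(\mathrm{qf}(U+\xi),\mathrm{qf}(V+\eta))$, let $F(U,V)=\operatorname{tr}(U^TAVN)$. Then there exists $L>0$ such that \[ \bigl|\mathrm{D}(F\circ R_{(U,V)})(t\zeta)[\zeta]-\mathrm{D}(F\circ R_{(U,V)})(0)[\zeta]\bigr|\le Lt \] for all $(U,V)\in M$, $\zeta=(\xi,\eta)\in T_{(U,V)}M$ with $\|\zeta\|_{(U,V)}=1$, and $t\ge 0$.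
   Context: $\mathrm{St}(p,n)=\{X\in\mathbb{R}^{n\times p}: X^TX=I_p\}$; for a full-rank $B$, $\mathrm{qf}(B)$ denotes the $Q$-factor of the unique decomposition $B=QR'$ with $Q$ having orthonormal columns and $R'$ upper triangular with positive diagonal. *)

theory Defs
  imports "HOL-Analysis.Analysis"
begin

definition stiefel :: "(real^('p::finite)^('m::finite)) set" where
  "stiefel = {X. transpose X ** X = mat 1}"

definition stiefel_tangent :: "real^('p::finite)^('m::finite) \<Rightarrow> (real^('p::finite)^('m::finite)) set" where
  "stiefel_tangent U = {\<xi>. transpose U ** \<xi> + transpose \<xi> ** U = 0}"

definition upper_tri :: "real^('p::{finite,wellorder})^('p::{finite,wellorder}) \<Rightarrow> bool" where
  "upper_tri R \<longleftrightarrow> (\<forall>i j. j < i \<longrightarrow> R$i$j = 0)"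

definition qf :: "real^('p::{finite,wellorder})^('m::finite) \<Rightarrow> real^('p::{finite,wellorder})^('m::finite)" where
  "qf B = (THE Q. transpose Q ** Q = mat 1 \<and>
              (\<exists>R. upper_tri R \<and> (\<forall>i. R$i$i > 0) \<and> B = Q ** R))"

definition diagm :: "(('p::finite) \<Rightarrow> real) \<Rightarrow> real^('p::finite)^('p::finite)" where
  "diagm \<mu> = (\<chi> i j. if i = j then \<mu> i else 0)"

definition prod_metric ::
  "real^('p::finite)^('m::finite) \<Rightarrow> real^('p::finite)^('n::finite) \<Rightarrow> real^('p::finite)^('m::finite) \<Rightarrow> real^('p::finite)^('n::finite) \<Rightarrow> real" where
  "prod_metric \<xi>1 \<eta>1 \<xi>2 \<eta>2 = trace (transpose \<xi>1 ** \<xi>2) + trace (transpose \<eta>1 ** \<eta>2)"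

definition costF ::
  "real^('n::finite)^('m::finite) \<Rightarrow> real^('p::finite)^('p::finite) \<Rightarrow> real^('p::finite)^('m::finite) \<Rightarrow> real^('p::finite)^('n::finite) \<Rightarrow> real" where
  "costF A N U V = trace (transpose U ** A ** V ** N)"

definition pullback_ray ::
  "real^('n::finite)^('m::finite) \<Rightarrow> real^('p::{finite,wellorder})^('p::{finite,wellorder}) \<Rightarrow> real^('p::{finite,wellorder})^('m::finite) \<Rightarrow> real^('p::{finite,wellorder})^('n::finite)
     \<Rightarrow> real^('p::{finite,wellorder})^('m::finite) \<Rightarrow> real^('p::{finite,wellorder})^('n::finite) \<Rightarrow> real \<Rightarrow> real" where
  "pullback_ray A N U V \<xi> \<eta> s = costF A N (qf (U + s *\<^sub>R \<xi>)) (qf (V + s *\<^sub>R \<eta>))"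

end

theory Submission
  imports Defs
begin

text \<open>
  For a tangent vector \<open>\<xi>\<close> at \<open>U\<close> one has \<open>(U + s\<xi>)\<^sup>T(U + s\<xi>) = I + s\<^sup>2\<xi>\<^sup>T\<xi>\<close>, so the ray
  \<open>U + s\<xi>\<close> has full rank and \<open>qf (U + s\<xi>) = (U + s\<xi>) T(s)\<close>, where \<open>T(s)\<close> is the inverse of the
  triangular QR factor.  Differentiating \<open>T\<^sup>T(I + s\<^sup>2\<xi>\<^sup>T\<xi>)T = I\<close> shows that \<open>T\<close> is differentiable
  with \<open>T' = - T \<Gamma>(2s T\<^sup>T\<xi>\<^sup>T\<xi>T)\<close>, where \<open>\<Gamma>\<close> keeps the strictly upper part and half the diagonal.
  Since \<open>\<parallel>T\<parallel>\<^sup>2 + s\<^sup>2\<parallel>\<xi>T\<parallel>\<^sup>2 = p\<close>, all of \<open>T\<close>, \<open>s\<xi>T\<close>, \<open>T'\<close>, the Q-factor and its derivative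
  are bounded by constants depending only on \<open>p\<close> when \<open>\<parallel>\<xi>\<parallel> \<le> 1\<close>.  Hence the derivative of the
  pullback is uniformly bounded, and on \<open>[0,1]\<close> it is uniformly Lipschitz at \<open>0\<close>, because these
  bounds propagate through the sums and products that make it up.  For \<open>t \<ge> 1\<close> the uniform bound
  on the derivative suffices.
\<close>

section \<open>Matrix algebra and the Frobenius norm\<close>

lemma matrix_mult_nth: "(A ** B) $ i $ j = (\<Sum>k\<in>UNIV. A $ i $ k * B $ k $ j)"
  by (simp add: matrix_matrix_mult_def)

lemma transpose_nth: "transpose A $ i $ j = A $ j $ i"
  by (simp add: transpose_def)

lemma matrix_add_rdistrib: "(B + C) ** A = B ** A + C ** (A :: 'a::semiring_1^_^_)"
  by (simp add: vec_eq_iff matrix_mult_nth distrib_right sum.distrib)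

lemma transpose_add: "transpose (A + B) = transpose A + transpose (B :: 'a::plus^_^_)"
  by (simp add: vec_eq_iff transpose_nth)

lemma transpose_diff: "transpose (A - B) = transpose A - transpose (B :: 'a::minus^_^_)"
  by (simp add: vec_eq_iff transpose_nth)

lemma transpose_uminus: "transpose (- A) = - transpose (A :: 'a::uminus^_^_)"
  by (simp add: vec_eq_iff transpose_nth)

lemma matrix_mult_scaleR_left: "(c *\<^sub>R A) ** B = c *\<^sub>R (A ** B)" for A :: "real^'n^'m"
  by (simp add: vec_eq_iff matrix_mult_nth sum_distrib_left mult.assoc)

lemma matrix_mult_scaleR_right: "A ** (c *\<^sub>R B) = c *\<^sub>R (A ** B)" for A :: "real^'n^'m"
  by (simp add: vec_eq_iff matrix_mult_nth sum_distrib_left algebra_simps)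

lemma matrix_mult_diff_left: "(A - C) ** B = A ** B - C ** (B :: 'a::ring_1^_^_)"
  by (simp add: vec_eq_iff matrix_mult_nth sum_subtractf algebra_simps)

lemma matrix_mult_diff_right: "A ** (B - C) = A ** B - A ** (C :: 'a::ring_1^_^_)"
  by (simp add: vec_eq_iff matrix_mult_nth sum_subtractf algebra_simps)

lemma matrix_mult_uminus_left: "(- A) ** B = - (A ** (B :: 'a::ring_1^_^_))"
  by (simp add: vec_eq_iff matrix_mult_nth sum_negf)

lemma matrix_mult_uminus_right: "A ** (- B) = - (A ** (B :: 'a::ring_1^_^_))"
  by (simp add: vec_eq_iff matrix_mult_nth sum_negf)

lemmas matrix_mult_simps = matrix_add_ldistrib matrix_add_rdistrib
  matrix_mult_scaleR_left matrix_mult_scaleR_right matrix_mult_diff_left matrix_mult_diff_right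
  matrix_mult_uminus_left matrix_mult_uminus_right transpose_add transpose_diff transpose_uminus
  transpose_scalar matrix_transpose_mul

lemma trace_scaleR: "trace (c *\<^sub>R A) = c * trace (A :: real^'n^'n)"
  by (simp add: trace_def sum_distrib_left)

lemma bounded_bilinear_matrix_mult:
  "bounded_bilinear ((**) :: real^'n^'m \<Rightarrow> real^'k^'n \<Rightarrow> real^'k^'m)"
  by (rule bilinear_conv_bounded_bilinear[THEN iffD1])
    (auto simp: bilinear_def intro!: linearI simp: matrix_mult_simps)

lemma bounded_linear_transpose: "bounded_linear (transpose :: real^'n^'m \<Rightarrow> real^'m^'n)"
  by (rule linear_conv_bounded_linear[THEN iffD1])
    (auto intro!: linearI simp: transpose_add transpose_scalar)

lemma bounded_linear_trace: "bounded_linear (trace :: real^'n^'n \<Rightarrow> real)"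
  by (rule linear_conv_bounded_linear[THEN iffD1])
    (auto intro!: linearI simp: trace_add trace_scaleR)

lemma inner_matrix_eq_trace: "(X :: real^'n^'m) \<bullet> Y = trace (transpose X ** Y)"
  by (simp add: inner_vec_def trace_def matrix_mult_nth transpose_nth) (subst sum.swap, simp)

lemma norm_matrix_sq_eq_trace: "norm (X :: real^'n^'m) ^ 2 = trace (transpose X ** X)"
  by (simp add: power2_norm_eq_inner inner_matrix_eq_trace)

lemma norm_matrix_sq: "norm (X :: real^'n^'m) ^ 2 = (\<Sum>i\<in>UNIV. \<Sum>j\<in>UNIV. (X $ i $ j)\<^sup>2)"
  by (simp add: norm_vec_def L2_set_def sum_nonneg power2_eq_square)

lemma norm_transpose: "norm (transpose (X :: real^'n^'m)) = norm X"
proof -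
  have "norm (transpose X) ^ 2 = norm X ^ 2"
    unfolding norm_matrix_sq by (simp add: transpose_nth) (rule sum.swap)
  then show ?thesis by (simp add: power2_eq_iff_nonneg)
qed

lemma norm_orthonormal_columns:
  "transpose (Q :: real^'p^'m) ** Q = mat 1 \<Longrightarrow> norm Q = sqrt (real CARD('p))"
  using norm_matrix_sq_eq_trace[of Q] by (simp add: trace_I real_sqrt_unique)

text \<open>The norm of \<open>real^'n^'m\<close> is the Frobenius norm; apply Cauchy-Schwarz to each entry.\<close>

lemma norm_matrix_mult_le: "norm ((A :: real^'n^'m) ** (B :: real^'k^'n)) \<le> norm A * norm B"
proof -
  have entry: "((A ** B) $ i $ j)\<^sup>2 \<le> (\<Sum>k\<in>UNIV. (A $ i $ k)\<^sup>2) * (\<Sum>k\<in>UNIV. (B $ k $ j)\<^sup>2)" for i j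
  proof -
    have "(A ** B) $ i $ j = (\<chi> k. A $ i $ k) \<bullet> (\<chi> k. B $ k $ j)"
      by (simp add: matrix_mult_nth inner_vec_def)
    then have "\<bar>(A ** B) $ i $ j\<bar> \<le> norm (\<chi> k. A $ i $ k) * norm (\<chi> k. B $ k $ j)"
      by (metis Cauchy_Schwarz_ineq2)
    then have "((A ** B) $ i $ j)\<^sup>2 \<le> (norm (\<chi> k. A $ i $ k) * norm (\<chi> k. B $ k $ j))\<^sup>2"
      by (metis abs_ge_zero power2_abs power_mono)
    then show ?thesis
      by (simp add: power_mult_distrib norm_vec_def L2_set_def sum_nonneg)
  qed
  have "norm (A ** B) ^ 2
      \<le> (\<Sum>i\<in>UNIV. \<Sum>j\<in>UNIV. (\<Sum>k\<in>UNIV. (A $ i $ k)\<^sup>2) * (\<Sum>k\<in>UNIV. (B $ k $ j)\<^sup>2))"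
    unfolding norm_matrix_sq by (intro sum_mono entry)
  also have "\<dots> = (\<Sum>i\<in>UNIV. \<Sum>k\<in>UNIV. (A $ i $ k)\<^sup>2) * (\<Sum>k\<in>UNIV. \<Sum>j\<in>UNIV. (B $ k $ j)\<^sup>2)"
    by (subst sum.swap[of _ UNIV UNIV]) (rule sum_product[symmetric])
  also have "\<dots> = (norm A * norm B)\<^sup>2"
    by (simp add: norm_matrix_sq power_mult_distrib)
  finally show ?thesis by (meson mult_nonneg_nonneg norm_ge_zero power2_le_imp_le)
qed

lemma abs_trace_le: "\<bar>trace (X :: real^'n^'n)\<bar> \<le> sqrt (real CARD('n)) * norm X"
proof -
  have "\<bar>trace X\<bar> = \<bar>mat 1 \<bullet> X\<bar>" by (simp add: inner_matrix_eq_trace)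
  also have "\<dots> \<le> norm (mat 1 :: real^'n^'n) * norm X" by (rule Cauchy_Schwarz_ineq2)
  finally show ?thesis by (simp add: norm_orthonormal_columns)
qed

lemma sum_UNIV_eq_single:
  fixes f :: "'a::finite \<Rightarrow> 'b::comm_monoid_add"
  assumes "\<And>k. k \<noteq> i \<Longrightarrow> f k = 0"
  shows "(\<Sum>k\<in>UNIV. f k) = f i"
  using assms by (subst sum.remove[of UNIV i]) (auto intro!: sum.neutral)

lemma continuous_on_matrix_mult [continuous_intros]:
  fixes f :: "'a::topological_space \<Rightarrow> real^'n^'m" and g :: "'a \<Rightarrow> real^'k^'n"
  shows "continuous_on S f \<Longrightarrow> continuous_on S g \<Longrightarrow> continuous_on S (\<lambda>x. f x ** g x)"
  by (rule bounded_bilinear.continuous_on[OF bounded_bilinear_matrix_mult])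

lemma continuous_on_transpose [continuous_intros]:
  fixes f :: "'a::topological_space \<Rightarrow> real^'n^'m"
  shows "continuous_on S f \<Longrightarrow> continuous_on S (\<lambda>x. transpose (f x))"
  by (rule bounded_linear.continuous_on[OF bounded_linear_transpose])

lemma tendsto_matrix_mult [tendsto_intros]:
  fixes f :: "'a \<Rightarrow> real^'n^'m" and g :: "'a \<Rightarrow> real^'k^'n"
  shows "(f \<longlongrightarrow> a) F \<Longrightarrow> (g \<longlongrightarrow> b) F \<Longrightarrow> ((\<lambda>x. f x ** g x) \<longlongrightarrow> a ** b) F"
  by (rule bounded_bilinear.tendsto[OF bounded_bilinear_matrix_mult])

lemma tendsto_transpose [tendsto_intros]:
  fixes f :: "'a \<Rightarrow> real^'n^'m"
  shows "(f \<longlongrightarrow> a) F \<Longrightarrow> ((\<lambda>x. transpose (f x)) \<longlongrightarrow> transpose a) F"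
  by (rule bounded_linear.tendsto[OF bounded_linear_transpose])

lemma inner_matrix_vector_mult: "(A *v x) \<bullet> (C *v y) = x \<bullet> ((transpose A ** C) *v y)"
  for A :: "real^'n^'m"
  by (metis dot_lmul_matrix matrix_vector_mul_assoc transpose_matrix_vector transpose_transpose)

lemma column_matrix_mult: "column i (B ** T) = B *v column i T"
  by (simp add: vec_eq_iff column_def matrix_vector_mult_def matrix_mult_nth)

section \<open>Upper triangular matrices and the QR decomposition\<close>

lemma upper_tri_mult_nth_below:
  assumes "upper_tri R" "upper_tri S" "j < i"
  shows "(R ** S) $ i $ j = 0"
  unfolding matrix_mult_nth
proof (rule sum.neutral, intro ballI)
  fix k
  show "R $ i $ k * S $ k $ j = 0"
  proof (cases "k < i")
    case True
    then show ?thesis using assms(1) unfolding upper_tri_def by simp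
  next
    case False
    then have "j < k" using assms(3) by auto
    then show ?thesis using assms(2) unfolding upper_tri_def by simp
  qed
qed

lemma upper_tri_mult: "upper_tri R \<Longrightarrow> upper_tri S \<Longrightarrow> upper_tri (R ** S)"
  using upper_tri_mult_nth_below unfolding upper_tri_def[of "R ** S"] by blast

lemma upper_tri_mult_diag:
  assumes "upper_tri R" "upper_tri S"
  shows "(R ** S) $ i $ i = R $ i $ i * S $ i $ i"
  unfolding matrix_mult_nth
proof (rule sum_UNIV_eq_single)
  fix k assume "k \<noteq> i"
  then have "k < i \<or> i < k" by auto
  then show "R $ i $ k * S $ k $ i = 0" using assms unfolding upper_tri_def by auto
qed

lemma upper_tri_diff: "upper_tri A \<Longrightarrow> upper_tri B \<Longrightarrow> upper_tri (A - B)"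
  by (simp add: upper_tri_def)

lemma det_upper_tri:
  fixes R :: "real^('p::{finite,wellorder})^('p::{finite,wellorder})"
  shows "upper_tri R \<Longrightarrow> det R = (\<Prod>i\<in>UNIV. R $ i $ i)"
  by (rule det_upperdiagonal) (auto simp: upper_tri_def)

text \<open>Solve \<open>R' R = I\<close> column by column, from left to right.\<close>

lemma upper_tri_inverse:
  fixes R :: "real^('p::{finite,wellorder})^('p::{finite,wellorder})"
  assumes ut: "upper_tri R" and nz: "\<And>i. R $ i $ i \<noteq> 0"
  obtains R' where "R ** R' = mat 1" "R' ** R = mat 1" "upper_tri R'"
    "\<And>i. R' $ i $ i = 1 / R $ i $ i"
proof -
  have "det R \<noteq> 0" using det_upper_tri[OF ut] nz by simp
  then obtain R' where R1: "R ** R' = mat 1" and R2: "R' ** R = mat 1"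
    unfolding invertible_det_nz[symmetric] invertible_def by blast
  have "\<forall>i. j < i \<longrightarrow> R' $ i $ j = 0" for j
  proof (induction j rule: less_induct)
    case (less j)
    show ?case
    proof (intro allI impI)
      fix i assume ji: "j < i"
      have "0 = (R' ** R) $ i $ j" using R2 ji by (simp add: mat_def)
      also have "\<dots> = R' $ i $ j * R $ j $ j"
        unfolding matrix_mult_nth
      proof (rule sum_UNIV_eq_single)
        fix k assume "k \<noteq> j"
        then consider "k < j" | "j < k" by fastforce
        then show "R' $ i $ k * R $ k $ j = 0"
          by cases (use less ji ut in \<open>auto simp: upper_tri_def\<close>)
      qed
      finally show "R' $ i $ j = 0" using nz[of j] by simp
    qed
  qed
  then have ut': "upper_tri R'" unfolding upper_tri_def by blast
  have "R' $ i $ i * R $ i $ i = 1" for i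
    using upper_tri_mult_diag[OF ut' ut, of i] R2 by (simp add: mat_def)
  then have "R' $ i $ i = 1 / R $ i $ i" for i using nz[of i] by (simp add: field_simps)
  with R1 R2 ut' show ?thesis by (rule that)
qed

lemma upper_tri_orthogonal_eq_mat_1:
  fixes M :: "real^('p::{finite,wellorder})^('p::{finite,wellorder})"
  assumes ut: "upper_tri M" and pos: "\<And>i. M $ i $ i > 0" and orth: "transpose M ** M = mat 1"
  shows "M = mat 1"
proof -
  have "\<forall>k. M $ k $ j = (if k = j then 1 else 0)" for j
  proof (induction j rule: less_induct)
    case (less j)
    have above: "M $ k $ j = 0" if "k < j" for k
    proof -
      have "0 = (transpose M ** M) $ k $ j" using orth that by (simp add: mat_def)
      also have "\<dots> = M $ k $ k * M $ k $ j"
        unfolding matrix_mult_nth transpose_nth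
        by (rule sum_UNIV_eq_single) (use less that in auto)
      finally show ?thesis using less that by simp
    qed
    have "1 = (transpose M ** M) $ j $ j" using orth by (simp add: mat_def)
    also have "\<dots> = M $ j $ j * M $ j $ j"
      unfolding matrix_mult_nth transpose_nth
    proof (rule sum_UNIV_eq_single)
      fix l assume "l \<noteq> j"
      then consider "l < j" | "j < l" by fastforce
      then show "M $ l $ j * M $ l $ j = 0"
        by cases (use above ut in \<open>auto simp: upper_tri_def\<close>)
    qed
    finally have "(M $ j $ j - 1) * (M $ j $ j + 1) = 0" by (simp add: algebra_simps)
    then have "M $ j $ j = 1" using pos[of j] by auto
    then show ?case using above ut unfolding upper_tri_def by (metis linorder_neqE)
  qed
  then show ?thesis by (simp add: vec_eq_iff mat_def)
qed

lemma qr_Q_unique: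
  fixes Q1 Q2 :: "real^('p::{finite,wellorder})^('m::finite)"
  assumes o1: "transpose Q1 ** Q1 = mat 1" and o2: "transpose Q2 ** Q2 = mat 1"
    and u1: "upper_tri R1" "\<And>i. R1 $ i $ i > 0" and u2: "upper_tri R2" "\<And>i. R2 $ i $ i > 0"
    and eq: "Q1 ** R1 = Q2 ** R2"
  shows "Q1 = Q2"
proof -
  obtain R' where r1: "R1 ** R' = mat 1" and ur: "upper_tri R'" and dr: "\<And>i. R' $ i $ i = 1 / R1 $ i $ i"
    using upper_tri_inverse[OF u1(1)] u1(2) by (metis less_irrefl)
  define M where "M = R2 ** R'"
  have uM: "upper_tri M" unfolding M_def by (rule upper_tri_mult[OF u2(1) ur])
  have pM: "M $ i $ i > 0" for i
    unfolding M_def using upper_tri_mult_diag[OF u2(1) ur] dr u1(2) u2(2) by simp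
  have q1: "Q1 = Q2 ** M"
    by (metis M_def eq matrix_mul_assoc matrix_mul_rid r1)
  have "transpose M ** M = transpose M ** (transpose Q2 ** Q2) ** M" using o2 by simp
  also have "\<dots> = transpose (Q2 ** M) ** (Q2 ** M)"
    by (simp add: matrix_transpose_mul matrix_mul_assoc)
  also have "\<dots> = mat 1" using q1 o1 by simp
  finally have "M = mat 1" using upper_tri_orthogonal_eq_mat_1[OF uM pM] by blast
  then show ?thesis using q1 by simp
qed

lemma qf_eqI:
  fixes Q :: "real^('p::{finite,wellorder})^('m::finite)"
  assumes "transpose Q ** Q = mat 1" "upper_tri R" "\<And>i. R $ i $ i > 0" "B = Q ** R"
  shows "qf B = Q"
  unfolding qf_def
proof (rule the_equality)
  show "transpose Q ** Q = mat 1 \<and> (\<exists>R. upper_tri R \<and> (\<forall>i. 0 < R $ i $ i) \<and> B = Q ** R)"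
    using assms by blast
  fix Q' assume "transpose Q' ** Q' = mat 1 \<and> (\<exists>R. upper_tri R \<and> (\<forall>i. 0 < R $ i $ i) \<and> B = Q' ** R)"
  then show "Q' = Q" using qr_Q_unique[of Q' Q] assms by metis
qed

lemma inner_gram_schmidt_residual:
  fixes q :: "'i \<Rightarrow> 'a::real_inner"
  assumes orth: "\<And>i l. i \<in> S \<Longrightarrow> l \<in> S \<Longrightarrow> q i \<bullet> q l = (if i = l then 1 else 0)"
    and "finite S" "l \<in> S"
  shows "(b - (\<Sum>i\<in>S. (b \<bullet> q i) *\<^sub>R q i)) \<bullet> q l = 0"
proof -
  have "(\<Sum>i\<in>S. (b \<bullet> q i) *\<^sub>R q i) \<bullet> q l = (\<Sum>i\<in>S. if i = l then b \<bullet> q l else 0)"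
    unfolding inner_sum_left by (rule sum.cong) (use orth \<open>l \<in> S\<close> in auto)
  then show ?thesis using assms(2,3) by (simp add: inner_diff_left)
qed

text \<open>
  Gram-Schmidt, phrased as the construction of the inverse \<open>T\<close> of the triangular factor:
  \<open>qr_partial B S T\<close> says that the columns of \<open>B T\<close> indexed by \<open>S\<close> are orthonormal and
  that \<open>T\<close> agrees with the identity outside \<open>S\<close>.
\<close>

definition qr_partial ::
  "real^('p::{finite,wellorder})^('m::finite) \<Rightarrow> 'p set \<Rightarrow> real^('p::{finite,wellorder})^('p::{finite,wellorder}) \<Rightarrow> bool" where
  "qr_partial B S T \<longleftrightarrow> upper_tri T \<and> (\<forall>i. T $ i $ i > 0) \<and>
     (\<forall>i. i \<notin> S \<longrightarrow> (\<forall>k. T $ k $ i = (if k = i then 1 else 0))) \<and>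
     (\<forall>i\<in>S. \<forall>l\<in>S. (B *v column i T) \<bullet> (B *v column l T) = (if i = l then 1 else 0))"

lemma qr_partial_extend:
  fixes B :: "real^('p::{finite,wellorder})^('m::finite)"
  assumes inj: "\<And>x. B *v x = 0 \<Longrightarrow> x = 0"
    and partial: "qr_partial B {k. k < j} T"
  shows "\<exists>T'. qr_partial B {k. k \<le> j} T'"
proof -
  let ?S = "{k. k < j}"
  define q where "q i = B *v column i T" for i
  define c where "c i = (B *v axis j 1) \<bullet> q i" for i
  define v where "v = axis j (1::real) - (\<Sum>i\<in>?S. c i *\<^sub>R column i T)"
  define w where "w = B *v v"
  define T' where "T' = (\<chi> k l. if l = j then (v /\<^sub>R norm w) $ k else T $ k $ l)"
  have ut: "upper_tri T" and dpos: "\<And>i. T $ i $ i > 0"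
    and outside: "\<And>i k. \<not> i < j \<Longrightarrow> T $ k $ i = (if k = i then 1 else 0)"
    and orth: "\<And>i l. i < j \<Longrightarrow> l < j \<Longrightarrow> q i \<bullet> q l = (if i = l then 1 else 0)"
    using partial unfolding qr_partial_def q_def by auto
  have vj: "v $ j = 1" and vk: "\<And>k. j < k \<Longrightarrow> v $ k = 0"
    using ut by (auto simp: v_def upper_tri_def column_def axis_def intro!: sum.neutral)
  then have "w \<noteq> 0" using inj unfolding w_def by force
  then have npos: "norm w > 0" by simp
  have wexp: "w = B *v axis j 1 - (\<Sum>i\<in>?S. c i *\<^sub>R q i)"
    unfolding w_def v_def q_def
    by (simp add: matrix_vector_mult_diff_distrib matrix_vector_mult_scaleR
        linear_sum[OF matrix_vector_mul_linear] o_def)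
  have wq: "w \<bullet> q l = 0" if "l < j" for l
    unfolding wexp c_def using inner_gram_schmidt_residual[of ?S q] orth that by simp
  have colT': "column i T' = (if i = j then v /\<^sub>R norm w else column i T)" for i
    by (simp add: T'_def column_def vec_eq_iff)
  have qj: "B *v column j T' = w /\<^sub>R norm w"
    by (simp add: colT' w_def matrix_vector_mult_scaleR)
  have ww: "(w /\<^sub>R norm w) \<bullet> (w /\<^sub>R norm w) = 1"
    using npos by (simp add: power2_norm_eq_inner[symmetric] power2_eq_square)
  have "qr_partial B {k. k \<le> j} T'"
    unfolding qr_partial_def
  proof (intro conjI allI impI ballI)
    show "upper_tri T'" using ut vk unfolding upper_tri_def T'_def by auto
    show "T' $ i $ i > 0" for i using dpos npos vj by (simp add: T'_def)
    show "T' $ k $ i = (if k = i then 1 else 0)" if "i \<notin> {k. k \<le> j}" for i k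
      using outside[of i k] that by (auto simp: T'_def)
    fix i l assume i: "i \<in> {k. k \<le> j}" and l: "l \<in> {k. k \<le> j}"
    consider "i = j" "l = j" | "i = j" "l < j" | "i < j" "l = j" | "i < j" "l < j"
      using i l by fastforce
    then show "(B *v column i T') \<bullet> (B *v column l T') = (if i = l then 1 else 0)"
      by cases (use qj ww wq orth in \<open>auto simp: colT' q_def inner_commute\<close>)
  qed
  then show ?thesis by blast
qed

lemma qr_partial_exists:
  fixes B :: "real^('p::{finite,wellorder})^('m::finite)"
  assumes inj: "\<And>x. B *v x = 0 \<Longrightarrow> x = 0"
  shows "\<exists>T. qr_partial B {k. k \<le> j} T"
proof (induction j rule: less_induct)
  case (less j)
  have "\<exists>T. qr_partial B {k. k < j} T"
  proof (cases "\<exists>k. k < j")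
    case True
    define j' where "j' = Max {k. k < j}"
    have j'j: "j' < j" using Max_in[of "{k. k < j}"] True unfolding j'_def by auto
    have "{k. k < j} = {k. k \<le> j'}"
      using Max_ge[of "{k. k < j}"] j'j unfolding j'_def[symmetric] by (auto intro: le_less_trans)
    then show ?thesis using less[OF j'j] by simp
  next
    case False
    then have "qr_partial B {k. k < j} (mat 1)"
      unfolding qr_partial_def upper_tri_def by (auto simp: mat_def)
    then show ?thesis by blast
  qed
  then show ?case using qr_partial_extend[OF inj] by blast
qed

lemma qr_inverse_factor_exists:
  fixes B :: "real^('p::{finite,wellorder})^('m::finite)"
  assumes inj: "\<And>x. B *v x = 0 \<Longrightarrow> x = 0"
  shows "\<exists>T. upper_tri T \<and> (\<forall>i. T $ i $ i > 0) \<and> transpose (B ** T) ** (B ** T) = mat 1"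
proof -
  have "{k. k \<le> Max UNIV} = (UNIV :: 'p set)" by (auto intro: Max_ge)
  then obtain T where "qr_partial B UNIV T"
    using qr_partial_exists[OF inj, where j = "Max UNIV"] by auto
  then show ?thesis unfolding qr_partial_def
    by (auto simp: vec_eq_iff matrix_mult_transpose_dot_column column_def matrix_vector_mult_def
        matrix_mult_nth mat_def)
qed

section \<open>The QR factor along a tangent ray\<close>

definition ray_Rinv ::
  "real^('p::{finite,wellorder})^('m::finite) \<Rightarrow> real^('p::{finite,wellorder})^('m::finite) \<Rightarrow> real
     \<Rightarrow> real^('p::{finite,wellorder})^('p::{finite,wellorder})" where
  "ray_Rinv U \<xi> s = (SOME T. upper_tri T \<and> (\<forall>i. T $ i $ i > 0) \<and>
     transpose ((U + s *\<^sub>R \<xi>) ** T) ** ((U + s *\<^sub>R \<xi>) ** T) = mat 1)"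

locale stiefel_tangent_ray =
  fixes U \<xi> :: "real^('p::{finite,wellorder})^('m::finite)"
  assumes stiefel: "U \<in> stiefel" and tangent: "\<xi> \<in> stiefel_tangent U"
begin

lemma gram_ray: "transpose (U + s *\<^sub>R \<xi>) ** (U + s *\<^sub>R \<xi>) = mat 1 + s\<^sup>2 *\<^sub>R (transpose \<xi> ** \<xi>)"
proof -
  have "transpose (U + s *\<^sub>R \<xi>) ** (U + s *\<^sub>R \<xi>)
      = transpose U ** U + s *\<^sub>R (transpose U ** \<xi> + transpose \<xi> ** U) + s\<^sup>2 *\<^sub>R (transpose \<xi> ** \<xi>)"
    by (simp add: matrix_mult_simps algebra_simps power2_eq_square scaleR_add_right)
  then show ?thesis using stiefel tangent by (simp add: stiefel_def stiefel_tangent_def)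
qed

lemma gram_ray_mult:
  "transpose ((U + s *\<^sub>R \<xi>) ** X) ** ((U + s *\<^sub>R \<xi>) ** X)
     = transpose X ** X + s\<^sup>2 *\<^sub>R (transpose (\<xi> ** X) ** (\<xi> ** X))"
proof -
  have "transpose ((U + s *\<^sub>R \<xi>) ** X) ** ((U + s *\<^sub>R \<xi>) ** X)
      = transpose X ** (transpose (U + s *\<^sub>R \<xi>) ** (U + s *\<^sub>R \<xi>)) ** X"
    by (simp add: matrix_transpose_mul matrix_mul_assoc)
  then show ?thesis unfolding gram_ray by (simp add: matrix_mult_simps matrix_mul_assoc)
qed

lemma ray_injective:
  assumes "(U + s *\<^sub>R \<xi>) *v x = 0"
  shows "x = 0"
proof -
  have "0 = ((U + s *\<^sub>R \<xi>) *v x) \<bullet> ((U + s *\<^sub>R \<xi>) *v x)" using assms by simp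
  also have "\<dots> = x \<bullet> x + s\<^sup>2 * ((\<xi> *v x) \<bullet> (\<xi> *v x))"
    unfolding inner_matrix_vector_mult gram_ray
    by (simp add: matrix_vector_mult_add_rdistrib inner_add_right inner_matrix_vector_mult
        flip: scaleR_matrix_vector_assoc)
  finally have "x \<bullet> x = 0"
    by (metis add_nonneg_eq_0_iff inner_ge_zero mult_nonneg_nonneg zero_le_power2)
  then show ?thesis by simp
qed

lemma ray_Rinv_upper_tri: "upper_tri (ray_Rinv U \<xi> s)"
  and ray_Rinv_diag_pos: "ray_Rinv U \<xi> s $ i $ i > 0"
  and ray_Rinv_orthonormal:
    "transpose ((U + s *\<^sub>R \<xi>) ** ray_Rinv U \<xi> s) ** ((U + s *\<^sub>R \<xi>) ** ray_Rinv U \<xi> s) = mat 1"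
proof -
  have "\<exists>T. upper_tri T \<and> (\<forall>i. T $ i $ i > 0) \<and>
      transpose ((U + s *\<^sub>R \<xi>) ** T) ** ((U + s *\<^sub>R \<xi>) ** T) = mat 1"
    by (rule qr_inverse_factor_exists) (rule ray_injective)
  from someI_ex[OF this, folded ray_Rinv_def]
  show "upper_tri (ray_Rinv U \<xi> s)" "ray_Rinv U \<xi> s $ i $ i > 0"
    "transpose ((U + s *\<^sub>R \<xi>) ** ray_Rinv U \<xi> s) ** ((U + s *\<^sub>R \<xi>) ** ray_Rinv U \<xi> s) = mat 1"
    by auto
qed

lemma qf_ray: "qf (U + s *\<^sub>R \<xi>) = (U + s *\<^sub>R \<xi>) ** ray_Rinv U \<xi> s"
proof -
  obtain R where inv: "ray_Rinv U \<xi> s ** R = mat 1" and ut: "upper_tri R"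
    and diag: "\<And>i. R $ i $ i = 1 / ray_Rinv U \<xi> s $ i $ i"
    using upper_tri_inverse[OF ray_Rinv_upper_tri] ray_Rinv_diag_pos by (metis less_irrefl)
  show ?thesis
  proof (rule qf_eqI[OF ray_Rinv_orthonormal ut])
    show "R $ i $ i > 0" for i using diag ray_Rinv_diag_pos by simp
    show "U + s *\<^sub>R \<xi> = ((U + s *\<^sub>R \<xi>) ** ray_Rinv U \<xi> s) ** R"
      by (simp add: inv flip: matrix_mul_assoc)
  qed
qed

lemma ray_Rinv_gram:
  "transpose (ray_Rinv U \<xi> s) ** ray_Rinv U \<xi> s
     + s\<^sup>2 *\<^sub>R (transpose (ray_Rinv U \<xi> s) ** (transpose \<xi> ** \<xi>) ** ray_Rinv U \<xi> s) = mat 1"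
  using ray_Rinv_orthonormal[of s] unfolding gram_ray_mult
  by (simp add: matrix_transpose_mul matrix_mul_assoc)

lemma norm_ray_Rinv_sq:
  "norm (ray_Rinv U \<xi> s) ^ 2 + s\<^sup>2 * norm (\<xi> ** ray_Rinv U \<xi> s) ^ 2 = real CARD('p)"
  using arg_cong[OF ray_Rinv_orthonormal[of s], of trace]
  by (simp add: gram_ray_mult trace_I trace_add trace_scaleR norm_matrix_sq_eq_trace)

lemma norm_ray_Rinv_le: "norm (ray_Rinv U \<xi> s) \<le> sqrt (real CARD('p))"
  using norm_ray_Rinv_sq[of s]
  by (metis le_add_same_cancel1 mult_nonneg_nonneg norm_ge_zero real_le_rsqrt zero_le_power2)

lemma abs_scaleR_norm_ray_Rinv_le: "\<bar>s\<bar> * norm (\<xi> ** ray_Rinv U \<xi> s) \<le> sqrt (real CARD('p))"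
proof -
  have "s\<^sup>2 * norm (\<xi> ** ray_Rinv U \<xi> s) ^ 2 \<le> real CARD('p)"
    using norm_ray_Rinv_sq[of s] zero_le_power2[of "norm (ray_Rinv U \<xi> s)"] by linarith
  then have "(\<bar>s\<bar> * norm (\<xi> ** ray_Rinv U \<xi> s))\<^sup>2 \<le> real CARD('p)"
    by (simp add: power_mult_distrib)
  then show ?thesis by (simp add: real_le_rsqrt)
qed

lemma ray_Rinv_unique:
  assumes ut: "upper_tri X" and nonneg: "\<And>i. X $ i $ i \<ge> 0"
    and orth: "transpose ((U + s *\<^sub>R \<xi>) ** X) ** ((U + s *\<^sub>R \<xi>) ** X) = mat 1"
  shows "X = ray_Rinv U \<xi> s"
proof -
  let ?T = "ray_Rinv U \<xi> s" and ?B = "U + s *\<^sub>R \<xi>"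
  have "transpose X ** (transpose ?B ** ?B) ** X = mat 1"
    using orth by (simp add: matrix_transpose_mul matrix_mul_assoc)
  then have "det X * det (transpose ?B ** ?B) * det X = 1"
    by (metis det_I det_mul det_transpose mult.commute)
  then have "det X \<noteq> 0" by auto
  then have nz: "X $ i $ i \<noteq> 0" for i using det_upper_tri[OF ut] by auto
  have pos: "X $ i $ i > 0" for i using nz[of i] nonneg[of i] by linarith
  obtain RX where rx: "X ** RX = mat 1" and urx: "upper_tri RX" and drx: "\<And>i. RX $ i $ i = 1 / X $ i $ i"
    using upper_tri_inverse[OF ut nz] by blast
  obtain RT where rt: "?T ** RT = mat 1" and urt: "upper_tri RT" and drt: "\<And>i. RT $ i $ i = 1 / ?T $ i $ i"
    using upper_tri_inverse[OF ray_Rinv_upper_tri] ray_Rinv_diag_pos by (metis less_irrefl)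
  have "(?B ** X) ** RX = (?B ** ?T) ** RT"
    by (simp add: rx rt flip: matrix_mul_assoc)
  then have eq: "?B ** X = ?B ** ?T"
    using qr_Q_unique[OF orth ray_Rinv_orthonormal urx _ urt] drx drt pos ray_Rinv_diag_pos by simp
  have "column i X = column i ?T" for i
  proof -
    have "?B *v (column i X - column i ?T) = 0"
      using eq by (metis column_matrix_mult matrix_vector_mult_diff_distrib right_minus_eq)
    then show ?thesis using ray_injective by fastforce
  qed
  then show ?thesis by (simp add: vec_eq_iff column_def)
qed

text \<open>A bounded map with closed graph is continuous; the graph is closed by uniqueness.\<close>

lemma continuous_on_ray_Rinv: "continuous_on UNIV (ray_Rinv U \<xi>)"
proof (rule continuous_from_closed_graph[of "cball 0 (sqrt (real CARD('p)))"])
  show "ray_Rinv U \<xi> \<in> UNIV \<rightarrow> cball 0 (sqrt (real CARD('p)))"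
    using norm_ray_Rinv_le by auto
  let ?Z = "{z. (\<forall>i j. j < i \<longrightarrow> snd z $ i $ j = 0) \<and> (\<forall>i. snd z $ i $ i \<ge> 0) \<and>
      transpose ((U + fst z *\<^sub>R \<xi>) ** snd z) ** ((U + fst z *\<^sub>R \<xi>) ** snd z) = mat 1}"
  have "(\<lambda>x. (x, ray_Rinv U \<xi> x)) ` UNIV = ?Z"
  proof (intro equalityI subsetI)
    fix z assume "z \<in> (\<lambda>x. (x, ray_Rinv U \<xi> x)) ` UNIV"
    then show "z \<in> ?Z"
      using ray_Rinv_upper_tri ray_Rinv_diag_pos ray_Rinv_orthonormal
      by (auto simp: upper_tri_def less_imp_le)
  next
    fix z assume "z \<in> ?Z"
    then have "snd z = ray_Rinv U \<xi> (fst z)"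
      by (intro ray_Rinv_unique) (auto simp: upper_tri_def)
    then show "z \<in> (\<lambda>x. (x, ray_Rinv U \<xi> x)) ` UNIV"
      by (intro image_eqI[where x = "fst z"]) (auto simp: prod_eq_iff)
  qed
  moreover have "closed ?Z"
    apply (intro closed_Collect_conj closed_Collect_all closed_Collect_imp)
    subgoal for i j by (cases "j < i") auto
    subgoal by (intro closed_Collect_eq continuous_intros)
    subgoal by (intro closed_Collect_le continuous_intros)
    subgoal by (intro closed_Collect_eq continuous_intros)
    done
  ultimately show "closed ((\<lambda>x. (x, ray_Rinv U \<xi> x)) ` UNIV)" by simp
qed simp

end

section \<open>Differentiability of the triangular factor\<close>

lemma has_vector_derivative_remainder_bound:
  fixes f :: "real \<Rightarrow> 'a::real_normed_vector"
  assumes bound: "eventually (\<lambda>h. norm (f (x + h) - f x - h *\<^sub>R v) \<le> \<bar>h\<bar> * g h) (at 0)"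
    and lim: "(g \<longlongrightarrow> 0) (at 0)"
  shows "(f has_vector_derivative v) (at x)"
proof -
  have "eventually (\<lambda>h. h \<noteq> 0) (at (0::real))" by (simp add: eventually_at_filter)
  with bound have "eventually (\<lambda>h. norm (norm (f (x + h) - f x - h *\<^sub>R v) / norm h) \<le> g h) (at 0)"
    by eventually_elim (auto simp: divide_le_eq mult.commute)
  then have "((\<lambda>h. norm (f (x + h) - f x - h *\<^sub>R v) / norm h) \<longlongrightarrow> 0) (at 0)"
    using lim by (rule Lim_null_comparison)
  then show ?thesis
    unfolding has_vector_derivative_def has_derivative_at by (simp add: bounded_linear_scaleR_left)
qed

text \<open>
  \<open>upper_half X\<close> is the map \<open>\<Gamma>\<close> that recovers an upper triangular \<open>E\<close> from the symmetric
  matrix \<open>E + E\<^sup>T\<close>.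
\<close>

definition upper_half ::
  "real^('p::{finite,wellorder})^('p::{finite,wellorder}) \<Rightarrow> real^('p::{finite,wellorder})^('p::{finite,wellorder})" where
  "upper_half X = (\<chi> i j. if i < j then X $ i $ j else if i = j then X $ i $ j / 2 else 0)"

lemma bounded_linear_upper_half: "bounded_linear upper_half"
  by (rule linear_conv_bounded_linear[THEN iffD1])
    (auto intro!: linearI simp: upper_half_def vec_eq_iff add_divide_distrib)

lemmas upper_half_add = linear_add[OF bounded_linear.linear[OF bounded_linear_upper_half]]
lemmas upper_half_scaleR = linear_scale[OF bounded_linear.linear[OF bounded_linear_upper_half]]
lemmas upper_half_diff = linear_diff[OF bounded_linear.linear[OF bounded_linear_upper_half]]
lemmas upper_half_minus = linear_neg[OF bounded_linear.linear[OF bounded_linear_upper_half]]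

lemma norm_upper_half_le: "norm (upper_half X) \<le> norm X"
proof -
  have "norm (upper_half X) ^ 2 \<le> norm X ^ 2"
    unfolding norm_matrix_sq by (intro sum_mono) (auto simp: upper_half_def power_divide)
  then show ?thesis using power2_le_imp_le by fastforce
qed

lemma upper_half_add_transpose: "upper_tri E \<Longrightarrow> upper_half (E + transpose E) = E"
  by (auto simp: upper_half_def vec_eq_iff transpose_nth upper_tri_def)

text \<open>A contraction argument: the fixed point equation controls \<open>D\<close> once \<open>E\<close> is small.\<close>

lemma norm_upper_half_fixpoint_le:
  assumes D: "D = - upper_half (transpose E ** D + W)" and E: "norm E \<le> 1/2"
  shows "norm D \<le> 2 * norm W"
proof -
  have "norm D \<le> norm (transpose E ** D + W)"
    using norm_upper_half_le by (subst D) (simp only: norm_minus_cancel)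
  also have "\<dots> \<le> norm E * norm D + norm W"
    using norm_matrix_mult_le[of "transpose E" D] norm_triangle_ineq[of "transpose E ** D" W]
    by (simp add: norm_transpose)
  also have "\<dots> \<le> 1/2 * norm D + norm W"
    using E by (intro add_right_mono mult_right_mono) auto
  finally show ?thesis by simp
qed

definition ray_Rinv_deriv ::
  "real^('p::{finite,wellorder})^('m::finite) \<Rightarrow> real^('p::{finite,wellorder})^('m::finite) \<Rightarrow> real
     \<Rightarrow> real^('p::{finite,wellorder})^('p::{finite,wellorder})" where
  "ray_Rinv_deriv U \<xi> s = - (ray_Rinv U \<xi> s **
     upper_half ((2 * s) *\<^sub>R (transpose (ray_Rinv U \<xi> s) ** (transpose \<xi> ** \<xi>) ** ray_Rinv U \<xi> s)))"

context stiefel_tangent_ray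
begin

text \<open>Compare the Gram identities at \<open>s\<^sub>0\<close> and \<open>s\<^sub>0 + h\<close> through \<open>T(s\<^sub>0 + h) = T(s\<^sub>0)(I + E)\<close>.\<close>

lemma ray_Rinv_increment_eq:
  fixes s0 h :: real
  assumes inv: "ray_Rinv U \<xi> s0 ** R0 = mat 1"
  defines "E \<equiv> R0 ** (ray_Rinv U \<xi> (s0 + h) - ray_Rinv U \<xi> s0)"
    and "Z \<equiv> transpose (ray_Rinv U \<xi> s0) ** (transpose \<xi> ** \<xi>) ** ray_Rinv U \<xi> s0"
  shows "E + transpose E
    = - (transpose E ** E + h *\<^sub>R ((2 * s0 + h) *\<^sub>R (transpose (mat 1 + E) ** Z ** (mat 1 + E))))"
proof -
  let ?S = "ray_Rinv U \<xi> s0" and ?T = "ray_Rinv U \<xi> (s0 + h)" and ?K = "transpose \<xi> ** \<xi>"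
  define F where "F = mat 1 + E"
  have "?S ** F = ?S + (?S ** R0) ** (?T - ?S)"
    unfolding F_def E_def by (simp only: matrix_add_ldistrib matrix_mul_assoc matrix_mul_rid)
  then have TF: "?T = ?S ** F" using inv by simp
  have "transpose ?S ** ?S + (s0 + h)\<^sup>2 *\<^sub>R Z = mat 1 + (h * (2 * s0 + h)) *\<^sub>R Z"
    using ray_Rinv_gram[of s0] unfolding Z_def[symmetric]
    by (simp add: algebra_simps power2_eq_square)
  moreover have "transpose ?T ** ?T + (s0 + h)\<^sup>2 *\<^sub>R (transpose ?T ** ?K ** ?T)
      = transpose F ** (transpose ?S ** ?S + (s0 + h)\<^sup>2 *\<^sub>R Z) ** F"
    unfolding TF Z_def
    by (simp add: matrix_transpose_mul matrix_mul_assoc matrix_mult_simps scaleR_add_right add.assoc)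
  ultimately have "transpose F ** (mat 1 + (h * (2 * s0 + h)) *\<^sub>R Z) ** F = mat 1"
    using ray_Rinv_gram[of "s0 + h"] by simp
  then have "mat 1 + E + transpose E + transpose E ** E
      + h *\<^sub>R ((2 * s0 + h) *\<^sub>R (transpose F ** Z ** F)) = mat 1"
    unfolding F_def by (simp add: matrix_mult_simps algebra_simps)
  then have "E + transpose E + (transpose E ** E
      + h *\<^sub>R ((2 * s0 + h) *\<^sub>R (transpose F ** Z ** F))) = 0"
    by (simp only: add.assoc) (metis add_left_imp_eq add.right_neutral)
  then show ?thesis unfolding F_def by (simp only: eq_neg_iff_add_eq_0)
qed

text \<open>
  With \<open>a = - \<Gamma>(2s\<^sub>0 Z)\<close> the candidate for \<open>T(s\<^sub>0)\<^sup>-\<^sup>1 T'(s\<^sub>0)\<close>, the remainder \<open>D = E - h a\<close>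
  satisfies a fixed point equation whose inhomogeneity is \<open>h\<close> times a term that vanishes with \<open>E\<close>.
\<close>

lemma ray_Rinv_remainder_eq:
  fixes s0 h :: real
  assumes inv: "ray_Rinv U \<xi> s0 ** R0 = mat 1" and ut: "upper_tri R0"
  defines "E \<equiv> R0 ** (ray_Rinv U \<xi> (s0 + h) - ray_Rinv U \<xi> s0)"
    and "Z \<equiv> transpose (ray_Rinv U \<xi> s0) ** (transpose \<xi> ** \<xi>) ** ray_Rinv U \<xi> s0"
  defines "a \<equiv> - upper_half ((2 * s0) *\<^sub>R Z)"
    and "r \<equiv> (2 * s0 + h) *\<^sub>R (transpose (mat 1 + E) ** Z ** (mat 1 + E)) - (2 * s0) *\<^sub>R Z"
  shows "E - h *\<^sub>R a = - upper_half (transpose E ** (E - h *\<^sub>R a) + h *\<^sub>R (transpose E ** a + r))"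
proof -
  have "upper_tri E"
    unfolding E_def by (intro upper_tri_mult ut upper_tri_diff ray_Rinv_upper_tri)
  then have "E = upper_half (E + transpose E)" by (simp add: upper_half_add_transpose)
  also have "E + transpose E
      = - (transpose E ** (E - h *\<^sub>R a) + h *\<^sub>R (transpose E ** a + r) + h *\<^sub>R ((2 * s0) *\<^sub>R Z))"
    unfolding ray_Rinv_increment_eq[OF inv, of h, folded E_def Z_def] r_def
    by (simp add: matrix_mult_simps algebra_simps)
  also have "upper_half (- (X + h *\<^sub>R Y)) = - upper_half X - h *\<^sub>R upper_half Y" for X Y
    by (simp add: upper_half_minus upper_half_diff upper_half_add upper_half_scaleR)
  finally show ?thesis by (simp add: a_def eq_diff_eq)
qed

lemma ray_Rinv_has_vector_derivative:
  "(ray_Rinv U \<xi> has_vector_derivative ray_Rinv_deriv U \<xi> s0) (at s0)"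
proof -
  let ?S = "ray_Rinv U \<xi> s0"
  obtain R0 where inv: "?S ** R0 = mat 1" and ut0: "upper_tri R0"
    using upper_tri_inverse[OF ray_Rinv_upper_tri] ray_Rinv_diag_pos by (metis less_irrefl)
  define Z where "Z = transpose ?S ** (transpose \<xi> ** \<xi>) ** ?S"
  define a where "a = - upper_half ((2 * s0) *\<^sub>R Z)"
  define E where "E h = R0 ** (ray_Rinv U \<xi> (s0 + h) - ?S)" for h
  define r where "r h = (2 * s0 + h) *\<^sub>R (transpose (mat 1 + E h) ** Z ** (mat 1 + E h)) - (2 * s0) *\<^sub>R Z"
    for h
  have remainder: "E h - h *\<^sub>R a
      = - upper_half (transpose (E h) ** (E h - h *\<^sub>R a) + h *\<^sub>R (transpose (E h) ** a + r h))" for h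
    unfolding E_def r_def a_def Z_def by (rule ray_Rinv_remainder_eq[OF inv ut0])
  have "isCont (ray_Rinv U \<xi>) s0"
    using continuous_on_ray_Rinv continuous_on_eq_continuous_at by blast
  then have "((\<lambda>h. ray_Rinv U \<xi> (s0 + h)) \<longlongrightarrow> ?S) (at 0)"
    by (rule isCont_tendsto_compose) (auto intro!: tendsto_eq_intros)
  then have "(E \<longlongrightarrow> R0 ** (?S - ?S)) (at 0)"
    unfolding E_def by (intro tendsto_intros)
  then have E_lim: "(E \<longlongrightarrow> 0) (at 0)" by simp
  have "(r \<longlongrightarrow> (2 * s0 + 0) *\<^sub>R (transpose (mat 1 + 0) ** Z ** (mat 1 + 0)) - (2 * s0) *\<^sub>R Z) (at 0)"
    unfolding r_def by (intro tendsto_intros E_lim)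
  then have r_lim: "(r \<longlongrightarrow> 0) (at 0)" by simp
  define g where "g h = 2 * norm ?S * (norm (E h) * norm a + norm (r h))" for h
  have g_lim: "(g \<longlongrightarrow> 0) (at 0)"
  proof -
    have "(g \<longlongrightarrow> 2 * norm ?S * (0 * norm a + 0)) (at 0)"
      unfolding g_def by (intro tendsto_intros tendsto_norm_zero E_lim r_lim)
    then show ?thesis by simp
  qed
  have "eventually (\<lambda>h. norm (E h) < 1/2) (at 0)"
    using order_tendstoD(2)[OF tendsto_norm_zero[OF E_lim], of "1/2"] by simp
  then have "eventually (\<lambda>h. norm (ray_Rinv U \<xi> (s0 + h) - ?S - h *\<^sub>R ray_Rinv_deriv U \<xi> s0)
      \<le> \<bar>h\<bar> * g h) (at 0)"
  proof eventually_elim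
    case (elim h)
    have "norm (E h - h *\<^sub>R a) \<le> 2 * norm (h *\<^sub>R (transpose (E h) ** a + r h))"
      using norm_upper_half_fixpoint_le[OF remainder] elim by simp
    also have "\<dots> \<le> 2 * (\<bar>h\<bar> * (norm (E h) * norm a + norm (r h)))"
      using norm_matrix_mult_le[of "transpose (E h)" a] norm_triangle_ineq[of "transpose (E h) ** a" "r h"]
      by (auto simp: norm_transpose intro!: mult_left_mono)
    finally have "norm ?S * norm (E h - h *\<^sub>R a)
        \<le> norm ?S * (2 * (\<bar>h\<bar> * (norm (E h) * norm a + norm (r h))))"
      by (rule mult_left_mono) simp
    then have "norm ?S * norm (E h - h *\<^sub>R a) \<le> \<bar>h\<bar> * g h"
      unfolding g_def by (simp add: algebra_simps)
    moreover have "ray_Rinv U \<xi> (s0 + h) - ?S - h *\<^sub>R ray_Rinv_deriv U \<xi> s0 = ?S ** (E h - h *\<^sub>R a)"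
      unfolding E_def a_def Z_def ray_Rinv_deriv_def
      by (simp add: matrix_mult_simps matrix_mul_assoc inv)
    ultimately show ?case using norm_matrix_mult_le[of ?S "E h - h *\<^sub>R a"] by simp
  qed
  then show ?thesis using g_lim by (rule has_vector_derivative_remainder_bound)
qed

end

section \<open>Bounded functions that are Lipschitz at the origin\<close>

text \<open>
  Boundedness is only required on \<open>[0,1]\<close>, so that factors such as \<open>U + s\<xi>\<close>, which are unbounded
  on the real line, may enter products.
\<close>

definition unit_lip0 :: "(real \<Rightarrow> 'a::real_normed_vector) \<Rightarrow> real \<Rightarrow> real \<Rightarrow> bool" where
  "unit_lip0 f M L \<longleftrightarrow> (\<forall>t\<in>{0..1}. norm (f t) \<le> M \<and> norm (f t - f 0) \<le> L * t)"

lemma unit_lip0_mono: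
  assumes "unit_lip0 f M L" "M \<le> M'" "L \<le> L'"
  shows "unit_lip0 f M' L'"
  unfolding unit_lip0_def
proof (intro ballI conjI)
  fix t :: real assume t: "t \<in> {0..1}"
  then have "L * t \<le> L' * t" using assms by (intro mult_right_mono) auto
  then show "norm (f t) \<le> M'" "norm (f t - f 0) \<le> L' * t"
    using assms t unfolding unit_lip0_def by fastforce+
qed

lemma unit_lip0_const: "unit_lip0 (\<lambda>s. c) (norm c) 0"
  by (simp add: unit_lip0_def)

lemma unit_lip0_scaled_ident: "unit_lip0 (\<lambda>s. c * s) \<bar>c\<bar> \<bar>c\<bar>"
  by (auto simp: unit_lip0_def abs_mult right_diff_distrib[symmetric] intro: mult_left_le)

lemma unit_lip0_bound_nonneg: "unit_lip0 f M L \<Longrightarrow> 0 \<le> M"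
  unfolding unit_lip0_def by (meson atLeastAtMost_iff norm_ge_zero order_trans zero_le_one order_refl)

lemma unit_lip0_add:
  assumes f: "unit_lip0 f M1 L1" and g: "unit_lip0 g M2 L2"
  shows "unit_lip0 (\<lambda>s. f s + g s) (M1 + M2) (L1 + L2)"
  unfolding unit_lip0_def
proof (intro ballI conjI)
  fix t :: real assume "t \<in> {0..1}"
  then have "norm (f t) \<le> M1" "norm (f t - f 0) \<le> L1 * t" "norm (g t) \<le> M2" "norm (g t - g 0) \<le> L2 * t"
    using f g unfolding unit_lip0_def by auto
  moreover have "norm (f t + g t - (f 0 + g 0)) \<le> norm (f t - f 0) + norm (g t - g 0)"
    using norm_triangle_ineq[of "f t - f 0" "g t - g 0"] by (simp add: algebra_simps)
  ultimately show "norm (f t + g t) \<le> M1 + M2" "norm (f t + g t - (f 0 + g 0)) \<le> (L1 + L2) * t"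
    using norm_triangle_ineq[of "f t" "g t"] by (auto simp: distrib_right)
qed

lemma unit_lip0_uminus: "unit_lip0 f M L \<Longrightarrow> unit_lip0 (\<lambda>s. - f s) M L"
  unfolding unit_lip0_def by (metis minus_diff_eq minus_diff_minus norm_minus_cancel)

lemma unit_lip0_bilinear:
  assumes norm_h: "\<And>a b. norm (h a b) \<le> norm a * norm b" and bl: "bounded_bilinear h"
    and f: "unit_lip0 f M1 L1" and g: "unit_lip0 g M2 L2"
  shows "unit_lip0 (\<lambda>s. h (f s) (g s)) (M1 * M2) (L1 * M2 + M1 * L2)"
  unfolding unit_lip0_def
proof (intro ballI conjI)
  fix t :: real assume t: "t \<in> {0..1}"
  have f1: "norm (f t) \<le> M1" "norm (f t - f 0) \<le> L1 * t" "norm (f 0) \<le> M1"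
    using f t unfolding unit_lip0_def by auto
  have g1: "norm (g t) \<le> M2" "norm (g t - g 0) \<le> L2 * t"
    using g t unfolding unit_lip0_def by auto
  have M: "0 \<le> M1" "0 \<le> M2" using f g by (auto intro: unit_lip0_bound_nonneg)
  have "norm (f t) * norm (g t) \<le> M1 * M2" by (rule mult_mono) (use f1 g1 M in auto)
  then show "norm (h (f t) (g t)) \<le> M1 * M2" using norm_h[of "f t" "g t"] by linarith
  have "h (f t) (g t) - h (f 0) (g 0) = h (f t - f 0) (g t) + h (f 0) (g t - g 0)"
    by (simp add: bounded_bilinear.diff_left[OF bl] bounded_bilinear.diff_right[OF bl])
  then have "norm (h (f t) (g t) - h (f 0) (g 0))
      \<le> norm (f t - f 0) * norm (g t) + norm (f 0) * norm (g t - g 0)"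
    using norm_triangle_ineq[of "h (f t - f 0) (g t)" "h (f 0) (g t - g 0)"]
      norm_h[of "f t - f 0" "g t"] norm_h[of "f 0" "g t - g 0"] by simp
  also have "\<dots> \<le> (L1 * t) * M2 + M1 * (L2 * t)"
    using f1 g1 M order_trans[OF norm_ge_zero f1(2)] by (intro add_mono mult_mono) auto
  finally show "norm (h (f t) (g t) - h (f 0) (g 0)) \<le> (L1 * M2 + M1 * L2) * t"
    by (simp add: algebra_simps)
qed

lemma unit_lip0_matrix_mult:
  fixes f :: "real \<Rightarrow> real^'n^'m" and g :: "real \<Rightarrow> real^'k^'n"
  shows "unit_lip0 f M1 L1 \<Longrightarrow> unit_lip0 g M2 L2 \<Longrightarrow>
    unit_lip0 (\<lambda>s. f s ** g s) (M1 * M2) (L1 * M2 + M1 * L2)"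
  by (rule unit_lip0_bilinear[OF norm_matrix_mult_le bounded_bilinear_matrix_mult])

lemma unit_lip0_scaleR:
  fixes f :: "real \<Rightarrow> real" and g :: "real \<Rightarrow> 'a::real_normed_vector"
  shows "unit_lip0 f M1 L1 \<Longrightarrow> unit_lip0 g M2 L2 \<Longrightarrow>
    unit_lip0 (\<lambda>s. f s *\<^sub>R g s) (M1 * M2) (L1 * M2 + M1 * L2)"
  by (rule unit_lip0_bilinear[OF _ bounded_bilinear_scaleR]) simp

lemma unit_lip0_linear:
  assumes bl: "bounded_linear h" and norm_h: "\<And>x. norm (h x) \<le> C * norm x" and C: "C \<ge> 0"
    and f: "unit_lip0 f M L"
  shows "unit_lip0 (\<lambda>s. h (f s)) (C * M) (C * L)"
  unfolding unit_lip0_def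
proof (intro ballI conjI)
  fix t :: real assume "t \<in> {0..1}"
  then have "norm (f t) \<le> M" "norm (f t - f 0) \<le> L * t" using f unfolding unit_lip0_def by auto
  moreover have "h (f t) - h (f 0) = h (f t - f 0)"
    by (simp add: linear_diff[OF bounded_linear.linear[OF bl]])
  ultimately show "norm (h (f t)) \<le> C * M" "norm (h (f t) - h (f 0)) \<le> C * L * t"
    using norm_h[of "f t"] norm_h[of "f t - f 0"] mult_left_mono[OF _ C]
    by (metis mult.assoc order_trans)+
qed

lemma unit_lip0_transpose:
  fixes f :: "real \<Rightarrow> real^'n^'m"
  shows "unit_lip0 f M L \<Longrightarrow> unit_lip0 (\<lambda>s. transpose (f s)) M L"
  using unit_lip0_linear[OF bounded_linear_transpose, of 1] by (simp add: norm_transpose)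

lemma unit_lip0_upper_half: "unit_lip0 f M L \<Longrightarrow> unit_lip0 (\<lambda>s. upper_half (f s)) M L"
  using unit_lip0_linear[OF bounded_linear_upper_half, of 1] norm_upper_half_le by fastforce

lemma unit_lip0_trace:
  fixes f :: "real \<Rightarrow> real^'n^'n"
  shows "unit_lip0 f M L \<Longrightarrow>
    unit_lip0 (\<lambda>s. trace (f s)) (sqrt (real CARD('n)) * M) (sqrt (real CARD('n)) * L)"
  by (rule unit_lip0_linear[OF bounded_linear_trace]) (use abs_trace_le in auto)

definition uniform_unit_lip0 :: "('x \<Rightarrow> bool) \<Rightarrow> ('x \<Rightarrow> real \<Rightarrow> 'a::real_normed_vector) \<Rightarrow> bool" where
  "uniform_unit_lip0 P f \<longleftrightarrow> (\<exists>M L. \<forall>x. P x \<longrightarrow> unit_lip0 (f x) M L)"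

lemma uniform_unit_lip0_compose:
  "uniform_unit_lip0 P f \<Longrightarrow> (\<And>x. Q x \<Longrightarrow> P (g x)) \<Longrightarrow> uniform_unit_lip0 Q (\<lambda>x. f (g x))"
  unfolding uniform_unit_lip0_def by blast

lemma uniform_unit_lip0_const:
  "(\<And>x. P x \<Longrightarrow> norm (c x) \<le> M) \<Longrightarrow> uniform_unit_lip0 P (\<lambda>x s. c x)"
  unfolding uniform_unit_lip0_def using unit_lip0_mono[OF unit_lip0_const] by blast

lemma uniform_unit_lip0_scaled_ident: "uniform_unit_lip0 P (\<lambda>x s. c * s)"
  unfolding uniform_unit_lip0_def using unit_lip0_scaled_ident by blast

lemma uniform_unit_lip0_add:
  "uniform_unit_lip0 P f \<Longrightarrow> uniform_unit_lip0 P g \<Longrightarrow> uniform_unit_lip0 P (\<lambda>x s. f x s + g x s)"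
  unfolding uniform_unit_lip0_def using unit_lip0_add by blast

lemma uniform_unit_lip0_uminus:
  "uniform_unit_lip0 P f \<Longrightarrow> uniform_unit_lip0 P (\<lambda>x s. - f x s)"
  unfolding uniform_unit_lip0_def using unit_lip0_uminus by blast

lemma uniform_unit_lip0_matrix_mult:
  fixes f :: "'x \<Rightarrow> real \<Rightarrow> real^'n^'m" and g :: "'x \<Rightarrow> real \<Rightarrow> real^'k^'n"
  shows "uniform_unit_lip0 P f \<Longrightarrow> uniform_unit_lip0 P g \<Longrightarrow>
    uniform_unit_lip0 P (\<lambda>x s. f x s ** g x s)"
  unfolding uniform_unit_lip0_def using unit_lip0_matrix_mult by blast

lemma uniform_unit_lip0_scaleR:
  fixes f :: "'x \<Rightarrow> real \<Rightarrow> real" and g :: "'x \<Rightarrow> real \<Rightarrow> 'a::real_normed_vector"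
  shows "uniform_unit_lip0 P f \<Longrightarrow> uniform_unit_lip0 P g \<Longrightarrow>
    uniform_unit_lip0 P (\<lambda>x s. f x s *\<^sub>R g x s)"
  unfolding uniform_unit_lip0_def using unit_lip0_scaleR by blast

lemma uniform_unit_lip0_transpose:
  fixes f :: "'x \<Rightarrow> real \<Rightarrow> real^'n^'m"
  shows "uniform_unit_lip0 P f \<Longrightarrow> uniform_unit_lip0 P (\<lambda>x s. transpose (f x s))"
  unfolding uniform_unit_lip0_def using unit_lip0_transpose by blast

lemma uniform_unit_lip0_upper_half:
  "uniform_unit_lip0 P f \<Longrightarrow> uniform_unit_lip0 P (\<lambda>x s. upper_half (f x s))"
  unfolding uniform_unit_lip0_def using unit_lip0_upper_half by blast

lemma uniform_unit_lip0_trace: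
  fixes f :: "'x \<Rightarrow> real \<Rightarrow> real^'n^'n"
  shows "uniform_unit_lip0 P f \<Longrightarrow> uniform_unit_lip0 P (\<lambda>x s. trace (f x s))"
  unfolding uniform_unit_lip0_def using unit_lip0_trace by blast

section \<open>Uniform estimates along unit tangent rays\<close>

definition ray_qf_deriv ::
  "real^('p::{finite,wellorder})^('m::finite) \<Rightarrow> real^('p::{finite,wellorder})^('m::finite) \<Rightarrow> real
     \<Rightarrow> real^('p::{finite,wellorder})^('m::finite)" where
  "ray_qf_deriv U \<xi> s = \<xi> ** ray_Rinv U \<xi> s + (U + s *\<^sub>R \<xi>) ** ray_Rinv_deriv U \<xi> s"

context stiefel_tangent_ray
begin

lemma ray_qf_has_vector_derivative:
  "((\<lambda>s. qf (U + s *\<^sub>R \<xi>)) has_vector_derivative ray_qf_deriv U \<xi> s) (at s)"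
proof -
  have "((\<lambda>s. U + s *\<^sub>R \<xi>) has_vector_derivative \<xi>) (at s)"
    by (auto intro!: derivative_eq_intros)
  from bounded_bilinear.has_vector_derivative[OF bounded_bilinear_matrix_mult this
      ray_Rinv_has_vector_derivative]
  show ?thesis unfolding qf_ray ray_qf_deriv_def by (simp add: add.commute)
qed

lemma norm_qf_ray: "norm (qf (U + s *\<^sub>R \<xi>)) = sqrt (real CARD('p))"
  unfolding qf_ray by (rule norm_orthonormal_columns[OF ray_Rinv_orthonormal])

end

locale unit_stiefel_tangent_ray = stiefel_tangent_ray U \<xi>
  for U \<xi> :: "real^('p::{finite,wellorder})^('m::finite)" +
  assumes norm_tangent_le: "norm \<xi> \<le> 1"
begin

lemma norm_tangent_mult_ray_Rinv_le: "norm (\<xi> ** ray_Rinv U \<xi> s) \<le> sqrt (real CARD('p))"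
proof -
  have "norm (\<xi> ** ray_Rinv U \<xi> s) \<le> norm \<xi> * norm (ray_Rinv U \<xi> s)"
    by (rule norm_matrix_mult_le)
  also have "\<dots> \<le> 1 * sqrt (real CARD('p))"
    using norm_tangent_le norm_ray_Rinv_le[of s] by (intro mult_mono) auto
  finally show ?thesis by simp
qed

lemma norm_upper_half_ray_Rinv_deriv_le:
  "norm (upper_half ((2 * s) *\<^sub>R (transpose (ray_Rinv U \<xi> s) ** (transpose \<xi> ** \<xi>) ** ray_Rinv U \<xi> s)))
     \<le> 2 * real CARD('p)"
proof -
  let ?X = "\<xi> ** ray_Rinv U \<xi> s"
  have Gram: "transpose (ray_Rinv U \<xi> s) ** (transpose \<xi> ** \<xi>) ** ray_Rinv U \<xi> s = transpose ?X ** ?X"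
    by (simp add: matrix_transpose_mul matrix_mul_assoc)
  have "norm (upper_half ((2 * s) *\<^sub>R (transpose ?X ** ?X))) \<le> 2 * \<bar>s\<bar> * norm (transpose ?X ** ?X)"
    using norm_upper_half_le[of "(2 * s) *\<^sub>R (transpose ?X ** ?X)"] by (simp add: abs_mult)
  also have "\<dots> \<le> 2 * ((\<bar>s\<bar> * norm ?X) * norm ?X)"
    using norm_matrix_mult_le[of "transpose ?X" ?X] by (simp add: norm_transpose mult_left_mono)
  also have "\<dots> \<le> 2 * (sqrt (real CARD('p)) * sqrt (real CARD('p)))"
    using abs_scaleR_norm_ray_Rinv_le[of s] norm_tangent_mult_ray_Rinv_le[of s]
    by (intro mult_left_mono mult_mono) auto
  finally show ?thesis by (simp add: Gram)
qed

lemma norm_ray_Rinv_deriv_le: "norm (ray_Rinv_deriv U \<xi> s) \<le> 2 * sqrt (real CARD('p)) ^ 3"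
proof -
  have "norm (ray_Rinv_deriv U \<xi> s) \<le> sqrt (real CARD('p)) * (2 * real CARD('p))"
    unfolding ray_Rinv_deriv_def norm_minus_cancel
    using norm_upper_half_ray_Rinv_deriv_le[of s] norm_ray_Rinv_le[of s]
    by (intro order_trans[OF norm_matrix_mult_le] mult_mono) auto
  then show ?thesis by (simp add: power3_eq_cube mult_ac)
qed

lemma norm_ray_qf_deriv_le: "norm (ray_qf_deriv U \<xi> s) \<le> 3 * sqrt (real CARD('p)) ^ 3"
proof -
  let ?r = "sqrt (real CARD('p))"
  have eq: "(U + s *\<^sub>R \<xi>) ** ray_Rinv_deriv U \<xi> s = - (qf (U + s *\<^sub>R \<xi>) **
      upper_half ((2 * s) *\<^sub>R (transpose (ray_Rinv U \<xi> s) ** (transpose \<xi> ** \<xi>) ** ray_Rinv U \<xi> s)))"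
    unfolding ray_Rinv_deriv_def qf_ray by (simp add: matrix_mult_uminus_right matrix_mul_assoc)
  have "norm ((U + s *\<^sub>R \<xi>) ** ray_Rinv_deriv U \<xi> s) \<le> ?r * (2 * real CARD('p))"
    unfolding eq norm_minus_cancel using norm_upper_half_ray_Rinv_deriv_le[of s]
    by (intro order_trans[OF norm_matrix_mult_le]) (simp add: norm_qf_ray mult_left_mono)
  moreover have "?r \<le> ?r ^ 3" by (rule power_increasing[of 1 3, simplified]) simp_all
  moreover have "?r * (2 * real CARD('p)) = 2 * ?r ^ 3" by (simp add: power3_eq_cube)
  ultimately show ?thesis
    unfolding ray_qf_deriv_def using norm_tangent_mult_ray_Rinv_le[of s]
      norm_triangle_ineq[of "\<xi> ** ray_Rinv U \<xi> s" "(U + s *\<^sub>R \<xi>) ** ray_Rinv_deriv U \<xi> s"]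
    by linarith
qed

lemma unit_lip0_ray_Rinv:
  "unit_lip0 (ray_Rinv U \<xi>) (sqrt (real CARD('p))) (2 * sqrt (real CARD('p)) ^ 3)"
  unfolding unit_lip0_def
proof (intro ballI conjI)
  fix t :: real assume t: "t \<in> {0..1}"
  show "norm (ray_Rinv U \<xi> t) \<le> sqrt (real CARD('p))" by (rule norm_ray_Rinv_le)
  have "norm (ray_Rinv U \<xi> t - ray_Rinv U \<xi> 0) \<le> 2 * sqrt (real CARD('p)) ^ 3 * norm (t - 0)"
  proof (rule differentiable_bound[where S = "{0..1}" and f' = "\<lambda>s h. h *\<^sub>R ray_Rinv_deriv U \<xi> s"])
    fix x assume "x \<in> {0..1::real}"
    show "(ray_Rinv U \<xi> has_derivative (\<lambda>h. h *\<^sub>R ray_Rinv_deriv U \<xi> x)) (at x within {0..1})"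
      using ray_Rinv_has_vector_derivative[of x] has_vector_derivative_at_within
      unfolding has_vector_derivative_def by blast
    show "onorm (\<lambda>h. h *\<^sub>R ray_Rinv_deriv U \<xi> x) \<le> 2 * sqrt (real CARD('p)) ^ 3"
      by (rule onorm_le) (use norm_ray_Rinv_deriv_le[of x] in \<open>simp add: mult.commute mult_left_mono\<close>)
  qed (use t in auto)
  then show "norm (ray_Rinv U \<xi> t - ray_Rinv U \<xi> 0) \<le> 2 * sqrt (real CARD('p)) ^ 3 * t"
    using t by simp
qed

lemma unit_lip0_ray: "unit_lip0 (\<lambda>s. U + s *\<^sub>R \<xi>) (sqrt (real CARD('p)) + 1) 1"
  unfolding unit_lip0_def
proof (intro ballI conjI)
  fix t :: real assume t: "t \<in> {0..1}"
  have "norm (U + t *\<^sub>R \<xi>) \<le> norm U + \<bar>t\<bar> * norm \<xi>"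
    using norm_triangle_ineq[of U "t *\<^sub>R \<xi>"] by simp
  also have "\<dots> \<le> sqrt (real CARD('p)) + 1"
    using t norm_tangent_le norm_orthonormal_columns[of U] stiefel mult_mono[of "\<bar>t\<bar>" 1 "norm \<xi>" 1]
    by (auto simp: stiefel_def)
  finally show "norm (U + t *\<^sub>R \<xi>) \<le> sqrt (real CARD('p)) + 1" .
  show "norm (U + t *\<^sub>R \<xi> - (U + 0 *\<^sub>R \<xi>)) \<le> 1 * t"
    using t norm_tangent_le mult_left_mono[of "norm \<xi>" 1 t] by auto
qed

end

lemma uniform_unit_lip0_ray_qf:
  "uniform_unit_lip0 (\<lambda>(U, \<xi>). unit_stiefel_tangent_ray U \<xi>) (\<lambda>(U, \<xi>) s. qf (U + s *\<^sub>R \<xi>))"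
  and uniform_unit_lip0_ray_qf_deriv:
  "uniform_unit_lip0 (\<lambda>(U, \<xi>). unit_stiefel_tangent_ray U \<xi>) (\<lambda>(U, \<xi>). ray_qf_deriv U \<xi>)"
proof -
  let ?P = "\<lambda>x. unit_stiefel_tangent_ray (fst x) (snd x)"
  have T: "uniform_unit_lip0 ?P (\<lambda>x. ray_Rinv (fst x) (snd x))"
    unfolding uniform_unit_lip0_def using unit_stiefel_tangent_ray.unit_lip0_ray_Rinv by fast
  have B: "uniform_unit_lip0 ?P (\<lambda>x s. fst x + s *\<^sub>R snd x)"
    unfolding uniform_unit_lip0_def using unit_stiefel_tangent_ray.unit_lip0_ray by fast
  have X: "uniform_unit_lip0 ?P (\<lambda>x s. snd x)"
    by (rule uniform_unit_lip0_const[where M = 1])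
      (simp add: unit_stiefel_tangent_ray_def unit_stiefel_tangent_ray_axioms_def)
  have "uniform_unit_lip0 ?P (\<lambda>x. ray_Rinv_deriv (fst x) (snd x))"
    unfolding ray_Rinv_deriv_def
    by (intro uniform_unit_lip0_uminus uniform_unit_lip0_matrix_mult uniform_unit_lip0_upper_half
        uniform_unit_lip0_scaleR uniform_unit_lip0_scaled_ident uniform_unit_lip0_transpose T X)
  then show "uniform_unit_lip0 (\<lambda>(U, \<xi>). unit_stiefel_tangent_ray U \<xi>) (\<lambda>(U, \<xi>). ray_qf_deriv U \<xi>)"
    unfolding ray_qf_deriv_def case_prod_beta
    by (intro uniform_unit_lip0_add uniform_unit_lip0_matrix_mult T B X)
  have "uniform_unit_lip0 ?P (\<lambda>x s. (fst x + s *\<^sub>R snd x) ** ray_Rinv (fst x) (snd x) s)"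
    by (intro uniform_unit_lip0_matrix_mult T B)
  then show "uniform_unit_lip0 (\<lambda>(U, \<xi>). unit_stiefel_tangent_ray U \<xi>) (\<lambda>(U, \<xi>) s. qf (U + s *\<^sub>R \<xi>))"
    unfolding uniform_unit_lip0_def case_prod_beta
    by (auto simp: unit_stiefel_tangent_ray_def stiefel_tangent_ray.qf_ray)
qed

section \<open>The pullback of the cost function\<close>

lemma bounded_bilinear_trace_form:
  fixes A :: "real^'n^'m" and N :: "real^'p^'p"
  shows "bounded_bilinear (\<lambda>(X :: real^'p^'m) (Y :: real^'p^'n). trace (transpose X ** A ** Y ** N))"
  by (rule bilinear_conv_bounded_bilinear[THEN iffD1])
    (auto simp: bilinear_def intro!: linearI simp: matrix_mult_simps trace_add trace_scaleR)

lemma abs_trace_form_le: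
  fixes X :: "real^'p^'m" and A :: "real^'n^'m" and Y :: "real^'p^'n" and N :: "real^'p^'p"
  shows "\<bar>trace (transpose X ** A ** Y ** N)\<bar>
    \<le> sqrt (real CARD('p)) * norm A * norm N * (norm X * norm Y)"
proof -
  have norm_le: "norm (transpose X ** A ** Y ** N) \<le> norm X * norm A * norm Y * norm N"
    using norm_matrix_mult_le[of "transpose X ** A ** Y" N] norm_matrix_mult_le[of "transpose X ** A" Y]
      norm_matrix_mult_le[of "transpose X" A]
    by (simp add: norm_transpose) (meson mult_right_mono norm_ge_zero order_trans)
  have "\<bar>trace (transpose X ** A ** Y ** N)\<bar> \<le> sqrt (real CARD('p)) * norm (transpose X ** A ** Y ** N)"
    by (rule abs_trace_le)
  also have "\<dots> \<le> sqrt (real CARD('p)) * (norm X * norm A * norm Y * norm N)"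
    using norm_le by (rule mult_left_mono) simp
  finally show ?thesis by (simp add: mult_ac)
qed

definition pullback_ray_deriv ::
  "real^('n::finite)^('m::finite) \<Rightarrow> real^('p::{finite,wellorder})^('p::{finite,wellorder})
     \<Rightarrow> real^('p::{finite,wellorder})^('m::finite) \<Rightarrow> real^('p::{finite,wellorder})^('n::finite)
     \<Rightarrow> real^('p::{finite,wellorder})^('m::finite) \<Rightarrow> real^('p::{finite,wellorder})^('n::finite)
     \<Rightarrow> real \<Rightarrow> real" where
  "pullback_ray_deriv A N U V \<xi> \<eta> s =
     trace (transpose (qf (U + s *\<^sub>R \<xi>)) ** A ** ray_qf_deriv V \<eta> s ** N)
   + trace (transpose (ray_qf_deriv U \<xi> s) ** A ** qf (V + s *\<^sub>R \<eta>) ** N)"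

lemma pullback_ray_has_real_derivative:
  fixes A :: "real^('n::finite)^('m::finite)" and N :: "real^('p::{finite,wellorder})^('p::{finite,wellorder})"
    and U \<xi> :: "real^('p::{finite,wellorder})^('m::finite)" and V \<eta> :: "real^('p::{finite,wellorder})^('n::finite)"
  assumes "stiefel_tangent_ray U \<xi>" "stiefel_tangent_ray V \<eta>"
  shows "(pullback_ray A N U V \<xi> \<eta> has_real_derivative pullback_ray_deriv A N U V \<xi> \<eta> s) (at s)"
  using bounded_bilinear.has_vector_derivative[OF bounded_bilinear_trace_form[of A N]
      stiefel_tangent_ray.ray_qf_has_vector_derivative[OF assms(1)]
      stiefel_tangent_ray.ray_qf_has_vector_derivative[OF assms(2)]]
  unfolding has_real_derivative_iff_has_vector_derivative pullback_ray_deriv_def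
  by (simp add: pullback_ray_def[abs_def] costF_def)

lemma abs_pullback_ray_deriv_le:
  fixes A :: "real^('n::finite)^('m::finite)" and N :: "real^('p::{finite,wellorder})^('p::{finite,wellorder})"
    and U \<xi> :: "real^('p::{finite,wellorder})^('m::finite)" and V \<eta> :: "real^('p::{finite,wellorder})^('n::finite)"
  assumes "unit_stiefel_tangent_ray U \<xi>" "unit_stiefel_tangent_ray V \<eta>"
  shows "\<bar>pullback_ray_deriv A N U V \<xi> \<eta> s\<bar> \<le> 6 * sqrt (real CARD('p)) ^ 5 * norm A * norm N"
proof -
  let ?c = "sqrt (real CARD('p)) * norm A * norm N" and ?r = "sqrt (real CARD('p))"
  have Q: "norm (qf (U + s *\<^sub>R \<xi>)) = ?r" "norm (qf (V + s *\<^sub>R \<eta>)) = ?r"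
    using assms[THEN unit_stiefel_tangent_ray.axioms(1)] by (simp_all add: stiefel_tangent_ray.norm_qf_ray)
  have Q': "norm (ray_qf_deriv U \<xi> s) \<le> 3 * ?r ^ 3" "norm (ray_qf_deriv V \<eta> s) \<le> 3 * ?r ^ 3"
    using assms unit_stiefel_tangent_ray.norm_ray_qf_deriv_le by blast+
  have "\<bar>trace (transpose (qf (U + s *\<^sub>R \<xi>)) ** A ** ray_qf_deriv V \<eta> s ** N)\<bar>
      \<le> ?c * (?r * (3 * ?r ^ 3))"
    using abs_trace_form_le[of "qf (U + s *\<^sub>R \<xi>)" A "ray_qf_deriv V \<eta> s" N] Q'(2)
    unfolding Q by (meson mult_left_mono order_trans mult_nonneg_nonneg norm_ge_zero real_sqrt_ge_zero of_nat_0_le_iff)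
  moreover have "\<bar>trace (transpose (ray_qf_deriv U \<xi> s) ** A ** qf (V + s *\<^sub>R \<eta>) ** N)\<bar>
      \<le> ?c * ((3 * ?r ^ 3) * ?r)"
    using abs_trace_form_le[of "ray_qf_deriv U \<xi> s" A "qf (V + s *\<^sub>R \<eta>)" N] Q'(1)
    unfolding Q by (meson mult_left_mono mult_right_mono order_trans mult_nonneg_nonneg norm_ge_zero
        real_sqrt_ge_zero of_nat_0_le_iff)
  ultimately have "\<bar>pullback_ray_deriv A N U V \<xi> \<eta> s\<bar> \<le> ?c * (?r * (3 * ?r ^ 3)) + ?c * ((3 * ?r ^ 3) * ?r)"
    unfolding pullback_ray_deriv_def by linarith
  then show ?thesis by (simp add: eval_nat_numeral algebra_simps)
qed

lemma pullback_ray_deriv_lip0: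
  fixes A :: "real^('n::finite)^('m::finite)" and N :: "real^('p::{finite,wellorder})^('p::{finite,wellorder})"
  obtains L where "\<And>U \<xi> V \<eta> t. unit_stiefel_tangent_ray U \<xi> \<Longrightarrow> unit_stiefel_tangent_ray V \<eta> \<Longrightarrow>
    t \<in> {0..1} \<Longrightarrow> \<bar>pullback_ray_deriv A N U V \<xi> \<eta> t - pullback_ray_deriv A N U V \<xi> \<eta> 0\<bar> \<le> L * t"
proof -
  let ?P = "\<lambda>x. unit_stiefel_tangent_ray (fst (fst x)) (snd (fst x)) \<and>
    unit_stiefel_tangent_ray (fst (snd x)) (snd (snd x))"
  have U: "uniform_unit_lip0 ?P (\<lambda>x s. qf (fst (fst x) + s *\<^sub>R snd (fst x)))"
    and U': "uniform_unit_lip0 ?P (\<lambda>x. ray_qf_deriv (fst (fst x)) (snd (fst x)))"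
    and V: "uniform_unit_lip0 ?P (\<lambda>x s. qf (fst (snd x) + s *\<^sub>R snd (snd x)))"
    and V': "uniform_unit_lip0 ?P (\<lambda>x. ray_qf_deriv (fst (snd x)) (snd (snd x)))"
    by (rule uniform_unit_lip0_compose[OF uniform_unit_lip0_ray_qf, unfolded case_prod_beta]
        uniform_unit_lip0_compose[OF uniform_unit_lip0_ray_qf_deriv, unfolded case_prod_beta]; simp)+
  have "uniform_unit_lip0 ?P (\<lambda>x. pullback_ray_deriv A N (fst (fst x)) (fst (snd x)) (snd (fst x)) (snd (snd x)))"
    unfolding pullback_ray_deriv_def
    by (intro uniform_unit_lip0_add uniform_unit_lip0_trace uniform_unit_lip0_matrix_mult
        uniform_unit_lip0_transpose uniform_unit_lip0_const[where M = "norm A"]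
        uniform_unit_lip0_const[where M = "norm N"] U U' V V' order_refl)
  then obtain M L where uniform: "\<And>x. ?P x \<Longrightarrow>
      unit_lip0 (pullback_ray_deriv A N (fst (fst x)) (fst (snd x)) (snd (fst x)) (snd (snd x))) M L"
    unfolding uniform_unit_lip0_def by blast
  show ?thesis
  proof (rule that)
    fix U \<xi> :: "real^('p::{finite,wellorder})^('m::finite)"
      and V \<eta> :: "real^('p::{finite,wellorder})^('n::finite)" and t :: real
    assume "unit_stiefel_tangent_ray U \<xi>" "unit_stiefel_tangent_ray V \<eta>" "t \<in> {0..1}"
    then show "\<bar>pullback_ray_deriv A N U V \<xi> \<eta> t - pullback_ray_deriv A N U V \<xi> \<eta> 0\<bar> \<le> L * t"
      using uniform[of "((U, \<xi>), (V, \<eta>))"] by (simp add: unit_lip0_def)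
  qed
qed

lemma abs_diff_le_if_lip0_bounded:
  fixes f :: "real \<Rightarrow> real"
  assumes near: "\<And>t. t \<in> {0..1} \<Longrightarrow> \<bar>f t - f 0\<bar> \<le> L * t"
    and bounded: "\<And>s. \<bar>f s\<bar> \<le> C" and t: "0 \<le> t"
  shows "\<bar>f t - f 0\<bar> \<le> max L (2 * C) * t"
proof (cases "t \<le> 1")
  case True
  then have "L * t \<le> max L (2 * C) * t" using t by (intro mult_right_mono) auto
  then show ?thesis using near[of t] t True by simp
next
  case False
  have "\<bar>f t - f 0\<bar> \<le> 2 * C * 1" using bounded[of t] bounded[of 0] by linarith
  also have "\<dots> \<le> 2 * C * t" using False bounded[of 0] by (intro mult_left_mono) auto
  also have "\<dots> \<le> max L (2 * C) * t" using t by (intro mult_right_mono) auto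
  finally show ?thesis .
qed

lemma prod_metric_self: "prod_metric \<xi> \<eta> \<xi> \<eta> = norm \<xi> ^ 2 + norm \<eta> ^ 2"
  by (simp add: prod_metric_def norm_matrix_sq_eq_trace)

lemma unit_stiefel_tangent_rays_of_unit_metric:
  assumes "U \<in> stiefel" "V \<in> stiefel" "\<xi> \<in> stiefel_tangent U" "\<eta> \<in> stiefel_tangent V"
    and "sqrt (prod_metric \<xi> \<eta> \<xi> \<eta>) = 1"
  shows "unit_stiefel_tangent_ray U \<xi>" "unit_stiefel_tangent_ray V \<eta>"
proof -
  have "norm \<xi> ^ 2 + norm \<eta> ^ 2 = 1" using assms(5) by (simp add: prod_metric_self)
  then have "norm \<xi> ^ 2 \<le> 1" "norm \<eta> ^ 2 \<le> 1"
    using zero_le_power2[of "norm \<xi>"] zero_le_power2[of "norm \<eta>"] by linarith+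
  then have "norm \<xi> \<le> 1" "norm \<eta> \<le> 1" by (simp_all add: power_le_one_iff)
  with assms(1-4) show "unit_stiefel_tangent_ray U \<xi>" "unit_stiefel_tangent_ray V \<eta>"
    by (simp_all add: unit_stiefel_tangent_ray_def unit_stiefel_tangent_ray_axioms_def
        stiefel_tangent_ray_def)
qed

theorem mainTheorem7:
  fixes A :: "real^('n::finite)^('m::finite)"
    and \<mu> :: "('p::{finite,wellorder}) \<Rightarrow> real"
  assumes "CARD('n) \<le> CARD('m)" and "CARD('p) \<le> CARD('n)"
    and "\<forall>i j. i < j \<longrightarrow> \<mu> i > \<mu> j"
    and "\<forall>i. \<mu> i > 0"
  shows "\<exists>L>0. \<forall>(U::real^('p::{finite,wellorder})^('m::finite)) (V::real^('p::{finite,wellorder})^('n::finite)) \<xi> \<eta> (t::real).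
           U \<in> stiefel \<and> V \<in> stiefel \<and> \<xi> \<in> stiefel_tangent U \<and> \<eta> \<in> stiefel_tangent V \<and>
           sqrt (prod_metric \<xi> \<eta> \<xi> \<eta>) = 1 \<and> t \<ge> 0 \<longrightarrow>
           (\<exists>D0 Dt. (pullback_ray A (diagm \<mu>) U V \<xi> \<eta> has_real_derivative D0) (at 0) \<and>
                    (pullback_ray A (diagm \<mu>) U V \<xi> \<eta> has_real_derivative Dt) (at t) \<and>
                    \<bar>Dt - D0\<bar> \<le> L * t)"
proof -
  define C where "C = 6 * sqrt (real CARD('p)) ^ 5 * norm A * norm (diagm \<mu>) + 1"
  have "C > 0" unfolding C_def by (intro add_nonneg_pos mult_nonneg_nonneg) simp_all
  obtain L where near: "\<And>U \<xi> V \<eta> t. unit_stiefel_tangent_ray U \<xi> \<Longrightarrow> unit_stiefel_tangent_ray V \<eta> \<Longrightarrow>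
      t \<in> {0..1} \<Longrightarrow> \<bar>pullback_ray_deriv A (diagm \<mu>) U V \<xi> \<eta> t
        - pullback_ray_deriv A (diagm \<mu>) U V \<xi> \<eta> 0\<bar> \<le> L * t"
    using pullback_ray_deriv_lip0[of A "diagm \<mu>"] by blast
  show ?thesis
  proof (rule exI[of _ "max L (2 * C)"], intro conjI allI impI)
    show "max L (2 * C) > 0" using \<open>C > 0\<close> by (simp add: less_max_iff_disj)
    fix U :: "real^('p::{finite,wellorder})^('m::finite)" and V :: "real^('p::{finite,wellorder})^('n::finite)"
      and \<xi> \<eta> and t :: real
    assume h: "U \<in> stiefel \<and> V \<in> stiefel \<and> \<xi> \<in> stiefel_tangent U \<and> \<eta> \<in> stiefel_tangent V \<and>
      sqrt (prod_metric \<xi> \<eta> \<xi> \<eta>) = 1 \<and> t \<ge> 0"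
    then have unit: "unit_stiefel_tangent_ray U \<xi>" "unit_stiefel_tangent_ray V \<eta>"
      using unit_stiefel_tangent_rays_of_unit_metric[of U V \<xi> \<eta>] by auto
    have "\<bar>pullback_ray_deriv A (diagm \<mu>) U V \<xi> \<eta> s\<bar> \<le> C" for s
      using abs_pullback_ray_deriv_le[OF unit, of A "diagm \<mu>" s] unfolding C_def by linarith
    with near[OF unit] h have "\<bar>pullback_ray_deriv A (diagm \<mu>) U V \<xi> \<eta> t
        - pullback_ray_deriv A (diagm \<mu>) U V \<xi> \<eta> 0\<bar> \<le> max L (2 * C) * t"
      by (intro abs_diff_le_if_lip0_bounded) auto
    with pullback_ray_has_real_derivative[OF unit[THEN unit_stiefel_tangent_ray.axioms(1)]]
    show "\<exists>D0 Dt. (pullback_ray A (diagm \<mu>) U V \<xi> \<eta> has_real_derivative D0) (at 0) \<and>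
        (pullback_ray A (diagm \<mu>) U V \<xi> \<eta> has_real_derivative Dt) (at t) \<and> \<bar>Dt - D0\<bar> \<le> max L (2 * C) * t"
      by blast
  qed
qed

end
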